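(* Let $k\ge1$, let $\theta_1,\dots,\theta_{k+1}\in[-\frac{\pi}{2},\frac{\pi}{2}]$ be pairwise distinct, $\theta_{\min}=\min_{p\ne j}|\theta_p-\theta_j|$, and $a=(a_1,\dots,a_{k+1})^T\in\mathbb C^{k+1}$ with $|a_j|\ge m_{\min}>0$ for all $j$. Let $A=(\phi_{2k}(e^{i\theta_1}),\dots,\phi_{2k}(e^{i\theta_{k+1}}))$. For $q\le k$ and $\hat\theta_1,\dots,\hat\theta_q\in\mathbb R$, $\hat a(q)=(\hat a_1,\dots,\hat a_q)^T\in\mathbb C^q$, let $\hat A(q)=(\phi_{2k}(e^{i\hat\theta_1}),\dots,\phi_{2k}(e^{i\hat\theta_q}))$. Then $$\min_{\hat a_p\in\mathbb C,\ \hat\theta_p\in\mathbb R,\ p=1,\dots,q}\|\hat A(q)\hat a(q)-Aa\|_2\ge\frac{\zeta(k+1)\,\xi(k)\,m_{\min}\,\theta_{\min}^{2k}}{\pi^{2k}}.$$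
   Context: $\phi_s(z)=(1,z,\dots,z^s)^T$. For an integer $k\ge1$: $\zeta(k)=\big((\tfrac{k-1}{2})!\big)^2$ if $k$ is odd, $\zeta(k)=(\tfrac{k}{2})!(\tfrac{k-2}{2})!$ if $k$ is even; $\xi(1)=\frac12$, $\xi(k)=\frac{(\frac{k-1}{2})!(\frac{k-3}{2})!}{4}$ if $k\ge3$ is odd, $\xi(k)=\frac{((\frac{k-2}{2})!)^2}{4}$ if $k$ is even. *)

theory Defs
  imports "HOL-Analysis.Analysis"
begin

text \<open>phi_s(z) = (1, z, ..., z^s)^T, as a function of the row index i = 0..s.\<close>
definition phi :: "nat \<Rightarrow> complex \<Rightarrow> nat \<Rightarrow> complex" where
  "phi s z i = (if i \<le> s then z ^ i else 0)"

definition zeta :: "nat \<Rightarrow> real" where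
  "zeta k = (if odd k then (fact ((k - 1) div 2))^2
             else fact (k div 2) * fact ((k - 2) div 2))"

definition xi :: "nat \<Rightarrow> real" where
  "xi k = (if k = 1 then 1/2
           else if odd k then fact ((k - 1) div 2) * fact ((k - 3) div 2) / 4
           else (fact ((k - 2) div 2))^2 / 4)"

definition vnorm2 :: "nat \<Rightarrow> (nat \<Rightarrow> complex) \<Rightarrow> real" where
  "vnorm2 s v = sqrt (\<Sum>i\<le>s. (cmod (v i))^2)"

text \<open>Matrix-vector product (phi_{s}(e^{i t_1}),...,phi_s(e^{i t_n})) c, columns indexed 1..n.\<close>
definition vmult :: "nat \<Rightarrow> nat \<Rightarrow> (nat \<Rightarrow> real) \<Rightarrow> (nat \<Rightarrow> complex) \<Rightarrow> nat \<Rightarrow> complex" where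
  "vmult s n t c i = (\<Sum>p=1..n. phi s (exp (\<i> * of_real (t p))) i * c p)"

end

theory Submission
  imports Defs "HOL-Computational_Algebra.Polynomial"
begin

text \<open>
  Write \<open>z\<^sub>j = exp(i \<theta>\<^sub>j)\<close> and \<open>w\<^sub>p = exp(i \<theta>'\<^sub>p)\<close> for the true and the estimated nodes,
  padding the \<open>q\<close> estimated nodes to \<open>k\<close> with zero weights, and let \<open>R = \<Prod>\<^sub>p (X - w\<^sub>p)\<close> and
  \<open>Q\<^sub>j = \<Prod>\<^sub>i\<^sub>\<noteq>\<^sub>j (X - z\<^sub>i)\<close>. Lagrange interpolation of the monic degree-\<open>k\<close> polynomial \<open>R\<close> at
  the \<open>k + 1\<close> nodes gives \<open>\<Sum>\<^sub>j R(z\<^sub>j) / Q\<^sub>j(z\<^sub>j) = 1\<close>, so \<open>|Q\<^sub>j(z\<^sub>j)| \<le> (k + 1) |R(z\<^sub>j)|\<close> for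
  some \<open>j\<close>. The degree-\<open>2k\<close> polynomial \<open>P = R Q\<^sub>j\<close> vanishes at every \<open>w\<^sub>p\<close> and at every
  \<open>z\<^sub>i\<close> with \<open>i \<noteq> j\<close>, so pairing its coefficient vector with the residual \<open>A' a' - A a\<close>
  yields \<open>-a\<^sub>j P(z\<^sub>j)\<close>. The coefficients of \<open>P\<close> have \<open>l\<^sup>1\<close>-norm at most \<open>4\<^sup>k\<close>, hence
  \<open>m_min |Q\<^sub>j(z\<^sub>j)|\<^sup>2 \<le> (k + 1) 4\<^sup>k \<parallel>A' a' - A a\<parallel>\<^sub>2\<close>. Finally
  \<open>|z\<^sub>j - z\<^sub>i| \<ge> 2 |\<theta>\<^sub>j - \<theta>\<^sub>i| / \<pi>\<close> by Jordan's inequality, and the product of the distances from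
  \<open>\<theta>\<^sub>j\<close> to the other \<open>k\<close> nodes, which are \<open>\<theta>_min\<close>-separated, is at least \<open>\<theta>_min\<^sup>k a! b!\<close>,
  where \<open>a + b = k\<close> count the nodes on either side of \<open>\<theta>\<^sub>j\<close>; and \<open>a! b! \<ge> \<zeta>(k + 1)\<close>.
\<close>

section \<open>Chords of the unit circle\<close>

lemma Jordan_inequality:
  fixes x :: real
  assumes "0 \<le> x" "x \<le> pi / 2"
  shows "2 / pi * x \<le> sin x"
proof -
  have convex: "convex_on {0..pi/2} (\<lambda>x. - sin x)"
  proof (rule convex_on_realI[where f'="\<lambda>x. - cos x"])
    show "connected {0..pi/2::real}" by simp
    show "((\<lambda>x. - sin x) has_real_derivative - cos x) (at x)" for x
      by (auto intro!: derivative_eq_intros)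
    show "- cos x \<le> - cos y" if "x \<in> {0..pi/2}" "y \<in> {0..pi/2}" "x \<le> y" for x y
      using that cos_monotone_0_pi_le[of x y] by auto
  qed
  define t where "t = 2 * x / pi"
  have t: "0 \<le> t" "t \<le> 1"
    using assms pi_gt_zero unfolding t_def by (auto simp: field_simps)
  have "- sin ((1 - t) *\<^sub>R 0 + t *\<^sub>R (pi/2)) \<le> (1 - t) * (- sin 0) + t * (- sin (pi/2))"
    using convex_onD[OF convex t, of 0 "pi/2"] by simp
  moreover have "(1 - t) *\<^sub>R 0 + t *\<^sub>R (pi/2) = x"
    unfolding t_def by simp
  ultimately show ?thesis
    unfolding t_def by simp
qed

lemma norm_exp_i_diff:
  fixes a b :: real
  shows "cmod (exp (\<i> * of_real a) - exp (\<i> * of_real b)) = 2 * \<bar>sin ((a - b) / 2)\<bar>"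
proof -
  have "exp (\<i> * of_real a) - exp (\<i> * of_real b)
      = exp (\<i> * of_real b) * (exp (\<i> * of_real (a - b)) - 1)"
    by (simp add: algebra_simps flip: exp_add)
  then have "cmod (exp (\<i> * of_real a) - exp (\<i> * of_real b))
      = cmod (exp (\<i> * of_real (a - b)) - 1)"
    by (simp only: norm_mult norm_exp_i_times mult_1_left)
  then show ?thesis
    by (simp only: dist_exp_i_1)
qed

lemma norm_exp_i_diff_ge:
  fixes a b :: real
  assumes "\<bar>a - b\<bar> \<le> pi"
  shows "2 / pi * \<bar>a - b\<bar> \<le> cmod (exp (\<i> * of_real a) - exp (\<i> * of_real b))"
proof -
  have abs_sin: "\<bar>sin (\<bar>a - b\<bar> / 2)\<bar> = \<bar>sin ((a - b) / 2)\<bar>"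
  proof (cases "a \<le> b")
    case True
    then have "(a - b) / 2 = - (\<bar>a - b\<bar> / 2)"
      by (simp add: abs_if)
    then show ?thesis
      by (simp only: sin_minus abs_minus_cancel)
  next
    case False
    then show ?thesis by simp
  qed
  have "2 / pi * \<bar>a - b\<bar> = 2 * (2 / pi * (\<bar>a - b\<bar> / 2))"
    by simp
  also have "\<dots> \<le> 2 * sin (\<bar>a - b\<bar> / 2)"
    using Jordan_inequality[of "\<bar>a - b\<bar> / 2"] assms by simp
  also have "\<dots> \<le> 2 * \<bar>sin ((a - b) / 2)\<bar>"
    unfolding abs_sin[symmetric] by simp
  also have "\<dots> = cmod (exp (\<i> * of_real a) - exp (\<i> * of_real b))"
    by (rule norm_exp_i_diff[symmetric])
  finally show ?thesis .
qed

lemma abs_diff_le_pi: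
  fixes x y :: real
  assumes "x \<in> {-pi/2..pi/2}" "y \<in> {-pi/2..pi/2}"
  shows "\<bar>x - y\<bar> \<le> pi"
  using assms by (auto simp: abs_le_iff)

lemma inj_on_exp_i:
  fixes \<theta> :: "'i \<Rightarrow> real"
  assumes "inj_on \<theta> I" and "\<forall>j\<in>I. \<theta> j \<in> {-pi/2..pi/2}"
  shows "inj_on (\<lambda>j. exp (\<i> * of_real (\<theta> j))) I"
proof (rule inj_onI)
  fix p j
  assume pj: "p \<in> I" "j \<in> I" "exp (\<i> * of_real (\<theta> p)) = exp (\<i> * of_real (\<theta> j))"
  have "\<bar>\<theta> p - \<theta> j\<bar> \<le> pi"
    using pj(1,2) assms(2) by (intro abs_diff_le_pi) auto
  then have "2 / pi * \<bar>\<theta> p - \<theta> j\<bar> \<le> 0"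
    using norm_exp_i_diff_ge[of "\<theta> p" "\<theta> j"] pj(3) by simp
  moreover have "0 < 2 / pi * \<bar>\<theta> p - \<theta> j\<bar>" if "p \<noteq> j"
    using that assms(1) pj(1,2) by (simp add: inj_on_eq_iff)
  ultimately show "p = j"
    by fastforce
qed

section \<open>The constants \<zeta> and \<xi>\<close>

lemma zeta_Suc_eq: "zeta (k + 1) = fact (k div 2) * fact (k - k div 2)"
proof (cases "even k")
  case True
  then have "k - k div 2 = k div 2" by auto
  with True show ?thesis
    unfolding zeta_def by (simp add: power2_eq_square)
next
  case False
  then have "(k + 1) div 2 = k - k div 2" "(k + 1 - 2) div 2 = k div 2"
    by presburger+
  with False show ?thesis
    unfolding zeta_def by (simp add: mult.commute)
qed

lemma zeta_nonneg: "0 \<le> zeta k"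
  unfolding zeta_def by simp

text \<open>The central binomial coefficient is the largest, so \<open>a! b!\<close> with \<open>a + b = k\<close> is
  smallest when \<open>a\<close> and \<open>b\<close> are as equal as possible.\<close>
lemma zeta_Suc_le_fact_mult:
  assumes "a + b = k"
  shows "zeta (k + 1) \<le> fact a * fact b"
proof -
  define m where "m = k div 2"
  have a: "a \<le> k" "b = k - a"
    using assms by auto
  have "fact m * fact (k - m) * (k choose a) \<le> fact m * fact (k - m) * (k choose m)"
    unfolding m_def by (simp add: binomial_maximum)
  also have "\<dots> = (fact k :: nat)"
    by (rule binomial_fact_lemma) (simp add: m_def)
  also have "\<dots> = fact a * fact b * (k choose a)"
    using binomial_fact_lemma[OF a(1)] by (simp add: a(2))
  finally have "fact m * fact (k - m) \<le> (fact a * fact b :: nat)"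
    using a(1) by simp
  then have "real (fact m * fact (k - m)) \<le> real (fact a * fact b)"
    by (rule of_nat_mono)
  then show ?thesis
    unfolding zeta_Suc_eq m_def by simp
qed

lemma Suc_mult_xi_le_zeta:
  assumes "k \<ge> 1"
  shows "(real k + 1) * xi k \<le> zeta (k + 1)"
proof (cases "k = 1")
  case True
  then show ?thesis by (simp add: xi_def zeta_def)
next
  case False
  then obtain l where l: "k div 2 = Suc l"
    using assms by (cases "k div 2") auto
  show ?thesis
  proof (cases "even k")
    case True
    then have k: "k = 2 * Suc l"
      using l by presburger
    have xi: "xi k = (fact l)^2 / 4"
      using False True unfolding xi_def k by simp
    have zeta: "zeta (k + 1) = fact (Suc l) * fact (Suc l)"
      unfolding zeta_Suc_eq k by simp
    have "(real k + 1) * xi k = (real k + 1) / 4 * (fact l)^2"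
      unfolding xi by simp
    also have "\<dots> \<le> real (Suc l) ^ 2 * (fact l)^2"
      unfolding k by (intro mult_right_mono) (simp_all add: power2_eq_square field_simps)
    also have "\<dots> = zeta (k + 1)"
      unfolding zeta by (simp add: fact_Suc power2_eq_square mult_ac)
    finally show ?thesis .
  next
    case odd: False
    then have k: "k = 2 * Suc l + 1"
      using l by presburger
    have xi: "xi k = fact (Suc l) * fact l / 4"
      using False odd unfolding xi_def k by simp
    have zeta: "zeta (k + 1) = fact (Suc l) * fact (Suc (Suc l))"
      unfolding zeta_Suc_eq k by simp
    have "(real k + 1) * xi k = (real k + 1) / 4 * (fact l * fact (Suc l))"
      unfolding xi by simp
    also have "\<dots> \<le> (real (Suc (Suc l)) * real (Suc l)) * (fact l * fact (Suc l))"
      unfolding k by (intro mult_right_mono) (simp_all add: field_simps)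
    also have "\<dots> = zeta (k + 1)"
      unfolding zeta by (simp add: fact_Suc mult_ac)
    finally show ?thesis .
  qed
qed

lemma zeta_xi_mult_le:
  assumes "k \<ge> 1" "0 \<le> m" "0 \<le> T"
    and "m * zeta (k + 1)^2 * T \<le> (real k + 1) * V"
  shows "zeta (k + 1) * xi k * m * T \<le> V"
proof -
  have "(real k + 1) * (zeta (k + 1) * xi k * m * T) \<le> m * zeta (k + 1)^2 * T"
    using mult_right_mono[OF Suc_mult_xi_le_zeta[OF assms(1)], of "zeta (k + 1) * m * T"]
      zeta_nonneg[of "k + 1"] assms(2,3)
    by (simp add: power2_eq_square mult_ac)
  then have "(real k + 1) * (zeta (k + 1) * xi k * m * T) \<le> (real k + 1) * V"
    using assms(4) by (rule order_trans)
  then show ?thesis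
    by (simp add: mult_le_cancel_left_pos)
qed

section \<open>Distances between separated points\<close>

definition separated :: "real \<Rightarrow> real set \<Rightarrow> bool" where
  "separated d T \<longleftrightarrow> (\<forall>y\<in>T. \<forall>y'\<in>T. y \<noteq> y' \<longrightarrow> d \<le> \<bar>y - y'\<bar>)"

lemma separated_subset: "separated d T \<Longrightarrow> S \<subseteq> T \<Longrightarrow> separated d S"
  unfolding separated_def by blast

lemma Max_ge_card_separated:
  fixes T :: "real set"
  assumes "finite T" "T \<noteq> {}" "separated d T" "\<forall>y\<in>T. x + d \<le> y"
  shows "x + d * card T \<le> Max T"
  using assms
proof (induction T rule: finite_linorder_max_induct)
  case empty
  then show ?case by simp
next
  case (insert b A)
  have "b \<notin> A"
    using insert.hyps(2) by blast
  have Max: "Max (insert b A) = b"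
    using insert.hyps by (intro Max_eqI) auto
  show ?case
  proof (cases "A = {}")
    case True
    then show ?thesis using insert.prems Max by simp
  next
    case False
    have "Max A \<in> A"
      using insert.hyps(1) False by simp
    then have "Max A < b" "Max A \<in> insert b A" "b \<in> insert b A"
      using insert.hyps(2) by auto
    then have "d \<le> b - Max A"
      using insert.prems(2) unfolding separated_def by force
    moreover have "x + d * card A \<le> Max A"
      using insert.IH False separated_subset[OF insert.prems(2)] insert.prems(3) by blast
    ultimately show ?thesis
      using insert.hyps(1) \<open>b \<notin> A\<close> Max by (simp add: algebra_simps)
  qed
qed

lemma prod_diff_ge_separated:
  fixes T :: "real set"
  assumes "finite T" "0 \<le> d" "separated d T" "\<forall>y\<in>T. x + d \<le> y"
  shows "d ^ card T * fact (card T) \<le> (\<Prod>y\<in>T. y - x)"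
  using assms
proof (induction T rule: finite_linorder_max_induct)
  case empty
  then show ?case by simp
next
  case (insert b A)
  have b_notin: "b \<notin> A"
    using insert.hyps(2) by blast
  have "x + d * card (insert b A) \<le> Max (insert b A)"
    using insert.hyps(1) insert.prems by (intro Max_ge_card_separated) auto
  also have "Max (insert b A) = b"
    using insert.hyps by (intro Max_eqI) auto
  finally have b_dist: "d * Suc (card A) \<le> b - x"
    using b_notin insert.hyps(1) by simp
  have "0 \<le> d * Suc (card A)"
    using insert.prems(1) by simp
  have IH: "d ^ card A * fact (card A) \<le> (\<Prod>y\<in>A. y - x)"
    using insert.IH insert.prems separated_subset[of d "insert b A" A] by blast
  have "d ^ card (insert b A) * fact (card (insert b A))
      = (d * Suc (card A)) * (d ^ card A * fact (card A))"
    using b_notin insert.hyps(1) by (simp add: algebra_simps)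
  also have "\<dots> \<le> (b - x) * (\<Prod>y\<in>A. y - x)"
    using b_dist IH insert.prems(1) order_trans[OF \<open>0 \<le> d * Suc (card A)\<close> b_dist]
    by (intro mult_mono) auto
  also have "\<dots> = (\<Prod>y\<in>insert b A. y - x)"
    using b_notin insert.hyps(1) by simp
  finally show ?case .
qed

lemma prod_abs_diff_ge_separated:
  fixes Y :: "real set"
  assumes "finite Y" "0 < d" "separated d Y" and dist: "\<forall>y\<in>Y. d \<le> \<bar>x - y\<bar>"
  shows "d ^ card Y * zeta (card Y + 1) \<le> (\<Prod>y\<in>Y. \<bar>x - y\<bar>)"
proof -
  define A where "A = {y\<in>Y. x < y}"
  define B where "B = {y\<in>Y. y < x}"
  have "x \<notin> Y"
    using assms(2) dist by force
  then have Y: "Y = A \<union> B" and disj: "A \<inter> B = {}"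
    unfolding A_def B_def by (auto simp: not_less order_le_less)
  have fin: "finite A" "finite B"
    using assms(1) unfolding A_def B_def by auto
  have card: "card A + card B = card Y"
    unfolding Y using fin disj by (simp add: card_Un_disjoint)
  have sep: "separated d A" "separated d B"
    using separated_subset[OF assms(3)] unfolding Y by auto
  have abs_A: "\<bar>x - y\<bar> = y - x" if "y \<in> A" for y
    using that unfolding A_def by simp
  have abs_B: "\<bar>x - y\<bar> = x - y" if "y \<in> B" for y
    using that unfolding B_def by simp
  have "\<forall>y\<in>A. x + d \<le> y"
    using dist abs_A unfolding A_def by fastforce
  then have above: "d ^ card A * fact (card A) \<le> (\<Prod>y\<in>A. y - x)"
    using fin(1) assms(2) sep(1) by (intro prod_diff_ge_separated) auto
  have "\<forall>y\<in>uminus ` B. - x + d \<le> y"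
    using dist abs_B unfolding B_def by fastforce
  moreover have "separated d (uminus ` B)"
    using sep(2) unfolding separated_def by (auto simp: abs_minus_commute)
  ultimately have "d ^ card (uminus ` B) * fact (card (uminus ` B)) \<le> (\<Prod>y\<in>uminus ` B. y - (- x))"
    using fin(2) assms(2) by (intro prod_diff_ge_separated) auto
  then have below: "d ^ card B * fact (card B) \<le> (\<Prod>y\<in>B. x - y)"
    by (simp add: card_image prod.reindex)
  have "0 \<le> (\<Prod>y\<in>A. y - x)"
    by (rule prod_nonneg) (simp add: A_def)
  have "d ^ card Y * zeta (card Y + 1) \<le> d ^ card Y * (fact (card A) * fact (card B))"
    using zeta_Suc_le_fact_mult[OF card] assms(2) by simp
  also have "\<dots> = (d ^ card A * fact (card A)) * (d ^ card B * fact (card B))"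
    by (simp flip: card add: power_add)
  also have "\<dots> \<le> (\<Prod>y\<in>A. y - x) * (\<Prod>y\<in>B. x - y)"
    using above below \<open>0 \<le> (\<Prod>y\<in>A. y - x)\<close> assms(2) by (intro mult_mono) auto
  also have "\<dots> = (\<Prod>y\<in>A. \<bar>x - y\<bar>) * (\<Prod>y\<in>B. \<bar>x - y\<bar>)"
  proof -
    have "(\<Prod>y\<in>A. \<bar>x - y\<bar>) = (\<Prod>y\<in>A. y - x)" "(\<Prod>y\<in>B. \<bar>x - y\<bar>) = (\<Prod>y\<in>B. x - y)"
      using abs_A abs_B by (auto intro: prod.cong)
    then show ?thesis by simp
  qed
  also have "\<dots> = (\<Prod>y\<in>Y. \<bar>x - y\<bar>)"
    unfolding Y using fin disj by (rule prod.union_disjoint[symmetric])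
  finally show ?thesis .
qed

lemma Min_pairwise_dist:
  fixes \<theta> :: "'i \<Rightarrow> real" and I :: "'i set"
  defines "D \<equiv> Min {\<bar>\<theta> p - \<theta> j\<bar> | p j. p \<in> I \<and> j \<in> I \<and> p \<noteq> j}"
  assumes "finite I" "inj_on \<theta> I" "p0 \<in> I" "j0 \<in> I" "p0 \<noteq> j0"
  shows "0 < D" and "\<forall>p\<in>I. \<forall>j\<in>I. p \<noteq> j \<longrightarrow> D \<le> \<bar>\<theta> p - \<theta> j\<bar>"
proof -
  let ?S = "{\<bar>\<theta> p - \<theta> j\<bar> | p j. p \<in> I \<and> j \<in> I \<and> p \<noteq> j}"
  have fin: "finite ?S"
    by (rule finite_subset[of _ "(\<lambda>(p, j). \<bar>\<theta> p - \<theta> j\<bar>) ` (I \<times> I)"])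
      (use assms(2) in auto)
  have "?S \<noteq> {}"
    using assms(4-6) by blast
  then have "D \<in> ?S"
    unfolding D_def using fin by (rule Min_in[rotated])
  then show "0 < D"
    using assms(3) by (auto dest: inj_onD)
  show "\<forall>p\<in>I. \<forall>j\<in>I. p \<noteq> j \<longrightarrow> D \<le> \<bar>\<theta> p - \<theta> j\<bar>"
    unfolding D_def using fin by (auto intro: Min_le)
qed

lemma prod_norm_exp_i_diff_ge:
  fixes \<theta> :: "'i \<Rightarrow> real"
  assumes "finite I" "j0 \<in> I" "0 < d" "\<forall>j\<in>I. \<theta> j \<in> {-pi/2..pi/2}"
    and sep: "\<forall>p\<in>I. \<forall>j\<in>I. p \<noteq> j \<longrightarrow> d \<le> \<bar>\<theta> p - \<theta> j\<bar>"
  shows "(2 / pi * d) ^ (card I - 1) * zeta (card I)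
           \<le> (\<Prod>j\<in>I - {j0}. cmod (exp (\<i> * of_real (\<theta> j0)) - exp (\<i> * of_real (\<theta> j))))"
proof -
  have inj: "inj_on \<theta> I"
    using sep \<open>0 < d\<close> by (force intro: inj_onI)
  have card: "card (\<theta> ` (I - {j0})) = card I - 1"
    using assms(1,2) inj by (simp add: card_image inj_on_diff card_Diff_singleton)
  have "separated d (\<theta> ` (I - {j0}))"
    unfolding separated_def by (auto intro!: sep[rule_format])
  moreover have "\<forall>y\<in>\<theta> ` (I - {j0}). d \<le> \<bar>\<theta> j0 - y\<bar>"
    using assms(2) by (auto intro!: sep[rule_format])
  moreover have "card I - 1 + 1 = card I"
    using assms(1,2) card_gt_0_iff[of I] by auto
  ultimately have "d ^ (card I - 1) * zeta (card I) \<le> (\<Prod>y\<in>\<theta> ` (I - {j0}). \<bar>\<theta> j0 - y\<bar>)"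
    using prod_abs_diff_ge_separated[of "\<theta> ` (I - {j0})" d "\<theta> j0"] assms(1,3) card by simp
  also have "\<dots> = (\<Prod>j\<in>I - {j0}. \<bar>\<theta> j0 - \<theta> j\<bar>)"
    using inj by (simp add: prod.reindex inj_on_diff)
  finally have lower: "d ^ (card I - 1) * zeta (card I) \<le> (\<Prod>j\<in>I - {j0}. \<bar>\<theta> j0 - \<theta> j\<bar>)" .
  have "(2 / pi * d) ^ (card I - 1) * zeta (card I)
      = (2 / pi) ^ (card I - 1) * (d ^ (card I - 1) * zeta (card I))"
    by (simp only: power_mult_distrib mult.assoc)
  also have "\<dots> \<le> (2 / pi) ^ (card I - 1) * (\<Prod>j\<in>I - {j0}. \<bar>\<theta> j0 - \<theta> j\<bar>)"
    using lower by (rule mult_left_mono) simp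
  also have "\<dots> = (\<Prod>j\<in>I - {j0}. 2 / pi * \<bar>\<theta> j0 - \<theta> j\<bar>)"
    by (simp only: prod.distrib prod_constant card_Diff_singleton[OF assms(2)])
  also have "\<dots> \<le> (\<Prod>j\<in>I - {j0}. cmod (exp (\<i> * of_real (\<theta> j0)) - exp (\<i> * of_real (\<theta> j))))"
    using assms(2,4) by (intro prod_mono norm_exp_i_diff_ge conjI abs_diff_le_pi) auto
  finally show ?thesis .
qed

section \<open>Lagrange interpolation\<close>

lemma degree_prod_linear:
  fixes f :: "'i \<Rightarrow> 'a::idom"
  assumes "finite A"
  shows "degree (\<Prod>i\<in>A. [:- f i, 1:]) = card A"
  using assms by (subst degree_prod_eq_sum_degree) auto

lemma coeff_prod_linear_card:
  fixes f :: "'i \<Rightarrow> 'a::idom"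
  assumes "finite A"
  shows "coeff (\<Prod>i\<in>A. [:- f i, 1:]) (card A) = 1"
  using lead_coeff_prod[of "\<lambda>i. [:- f i, 1:]" A] degree_prod_linear[OF assms, of f] by simp

lemma poly_prod_linear_eq_0:
  fixes f :: "'i \<Rightarrow> 'a::comm_ring_1"
  assumes "finite A" "p \<in> A"
  shows "poly (\<Prod>i\<in>A. [:- f i, 1:]) (f p) = 0"
  unfolding poly_prod using assms by (intro prod_zero bexI[of _ p]) auto

definition node_poly :: "'i set \<Rightarrow> ('i \<Rightarrow> 'a::comm_ring_1) \<Rightarrow> 'i \<Rightarrow> 'a poly" where
  "node_poly I z j = (\<Prod>i\<in>I - {j}. [:- z i, 1:])"

lemma poly_node_poly_eq_0:
  assumes "finite I" "l \<in> I" "j \<noteq> l"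
  shows "poly (node_poly I z j) (z l) = 0"
  using assms unfolding node_poly_def poly_prod by (intro prod_zero) auto

lemma poly_node_poly_nonzero:
  fixes z :: "'i \<Rightarrow> 'a::idom"
  assumes "finite I" "inj_on z I" "j \<in> I"
  shows "poly (node_poly I z j) (z j) \<noteq> 0"
  using assms unfolding node_poly_def poly_prod by (auto simp: inj_on_def)

lemma degree_node_poly:
  fixes z :: "'i \<Rightarrow> 'a::idom"
  assumes "finite I" "j \<in> I"
  shows "degree (node_poly I z j) = card I - 1"
  using assms degree_prod_linear[of "I - {j}" z] unfolding node_poly_def
  by (simp add: card_Diff_singleton)

lemma coeff_node_poly:
  fixes z :: "'i \<Rightarrow> 'a::idom"
  assumes "finite I" "j \<in> I"
  shows "coeff (node_poly I z j) (card I - 1) = 1"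
  using assms coeff_prod_linear_card[of "I - {j}" z] unfolding node_poly_def
  by (simp add: card_Diff_singleton)

text \<open>Comparing leading coefficients in the Lagrange interpolation formula for \<open>R\<close>.\<close>
lemma sum_poly_div_node_poly:
  fixes z :: "'i \<Rightarrow> 'a::field"
  assumes fin: "finite I" and inj: "inj_on z I" and deg: "degree R < card I"
  shows "(\<Sum>j\<in>I. poly R (z j) / poly (node_poly I z j) (z j)) = coeff R (card I - 1)"
proof -
  define c where "c j = poly R (z j) / poly (node_poly I z j) (z j)" for j
  define S where "S = (\<Sum>j\<in>I. smult (c j) (node_poly I z j))"
  have "R = S"
  proof (rule poly_eqI_degree[where A="z ` I"])
    fix x
    assume "x \<in> z ` I"
    then obtain l where l: "l \<in> I" "x = z l" by auto
    have "poly S x = (\<Sum>j\<in>I. c j * poly (node_poly I z j) (z l))"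
      unfolding S_def l by (simp add: poly_sum)
    also have "\<dots> = c l * poly (node_poly I z l) (z l)"
    proof -
      have "(\<Sum>j\<in>I - {l}. c j * poly (node_poly I z j) (z l)) = 0"
        using poly_node_poly_eq_0[OF fin l(1)] by (intro sum.neutral) auto
      then show ?thesis
        using sum.remove[OF fin l(1), of "\<lambda>j. c j * poly (node_poly I z j) (z l)"] by simp
    qed
    also have "\<dots> = poly R x"
      using poly_node_poly_nonzero[OF fin inj l(1)] l unfolding c_def by simp
    finally show "poly R x = poly S x" by simp
  next
    show "degree R < card (z ` I)"
      using deg card_image[OF inj] by simp
    have "degree S \<le> card I - 1"
      unfolding S_def using fin
      by (intro degree_sum_le) (auto intro: order.trans[OF degree_smult_le] simp: degree_node_poly)
    then show "degree S < card (z ` I)"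
      using card_image[OF inj] deg by simp
  qed
  then have "coeff R (card I - 1) = (\<Sum>j\<in>I. c j * coeff (node_poly I z j) (card I - 1))"
    unfolding S_def by (simp add: coeff_sum)
  also have "\<dots> = (\<Sum>j\<in>I. c j)"
    using coeff_node_poly[OF fin] by (intro sum.cong) auto
  finally show ?thesis
    unfolding c_def ..
qed

lemma exists_node_poly_le:
  fixes z :: "'i \<Rightarrow> 'a::real_normed_field"
  assumes fin: "finite I" and inj: "inj_on z I"
    and deg: "degree R < card I" and coeff: "coeff R (card I - 1) = 1"
  obtains j where "j \<in> I" "norm (poly (node_poly I z j) (z j)) \<le> card I * norm (poly R (z j))"
proof (rule ccontr)
  note choose = that
  assume "\<not> thesis"
  have "I \<noteq> {}"
    using deg by auto
  then have "0 < card I"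
    using fin by (simp add: card_gt_0_iff)
  have small: "norm (poly R (z j) / poly (node_poly I z j) (z j)) < 1 / card I" if "j \<in> I" for j
  proof -
    have "card I * norm (poly R (z j)) < norm (poly (node_poly I z j) (z j))"
      using choose[OF that] \<open>\<not> thesis\<close> by fastforce
    then show ?thesis
      using \<open>0 < card I\<close> poly_node_poly_nonzero[OF fin inj that]
      by (simp add: norm_divide field_simps)
  qed
  have "1 = norm (\<Sum>j\<in>I. poly R (z j) / poly (node_poly I z j) (z j))"
    using sum_poly_div_node_poly[OF fin inj deg] coeff by simp
  also have "\<dots> \<le> (\<Sum>j\<in>I. norm (poly R (z j) / poly (node_poly I z j) (z j)))"
    by (rule norm_sum)
  also have "\<dots> < (\<Sum>j\<in>I. 1 / card I)"
    using fin \<open>I \<noteq> {}\<close> small by (intro sum_strict_mono) auto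
  also have "\<dots> = 1"
    using fin \<open>I \<noteq> {}\<close> by simp
  finally show False by simp
qed

section \<open>The \<open>l\<^sup>1\<close>-norm of the coefficients of a polynomial\<close>

definition coeff_norm1 :: "'a::real_normed_vector poly \<Rightarrow> real" where
  "coeff_norm1 p = (\<Sum>i\<le>degree p. norm (coeff p i))"

lemma coeff_norm1_eq:
  assumes "degree p \<le> N"
  shows "coeff_norm1 p = (\<Sum>i\<le>N. norm (coeff p i))"
  unfolding coeff_norm1_def using assms
  by (intro sum.mono_neutral_left) (auto simp: coeff_eq_0)

lemma coeff_norm1_1: "coeff_norm1 (1 :: 'a::real_normed_field poly) = 1"
  unfolding coeff_norm1_def by simp

lemma coeff_norm1_add: "coeff_norm1 (p + q) \<le> coeff_norm1 p + coeff_norm1 q"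
proof -
  define N where "N = max (degree p) (degree q)"
  have "coeff_norm1 (p + q) = (\<Sum>i\<le>N. norm (coeff p i + coeff q i))"
    unfolding N_def by (subst coeff_norm1_eq[OF degree_add_le_max]) simp_all
  also have "\<dots> \<le> (\<Sum>i\<le>N. norm (coeff p i) + norm (coeff q i))"
    by (intro sum_mono norm_triangle_ineq)
  also have "\<dots> = coeff_norm1 p + coeff_norm1 q"
    using coeff_norm1_eq[of p N] coeff_norm1_eq[of q N] unfolding N_def by (simp add: sum.distrib)
  finally show ?thesis .
qed

lemma coeff_norm1_smult:
  fixes p :: "'a::real_normed_field poly"
  shows "coeff_norm1 (smult c p) = norm c * coeff_norm1 p"
  by (simp add: coeff_norm1_eq[OF degree_smult_le] coeff_norm1_def norm_mult sum_distrib_left)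

lemma coeff_norm1_pCons_0: "coeff_norm1 (pCons 0 p) = coeff_norm1 p"
proof -
  have "coeff_norm1 (pCons 0 p) = (\<Sum>i\<le>Suc (degree p). norm (coeff (pCons 0 p) i))"
    by (rule coeff_norm1_eq) (simp add: degree_pCons_le)
  also have "\<dots> = (\<Sum>i\<le>degree p. norm (coeff p i))"
    by (simp only: sum.atMost_Suc_shift) simp
  finally show ?thesis
    unfolding coeff_norm1_def .
qed

lemma coeff_norm1_linear_mult:
  fixes p :: "'a::real_normed_field poly"
  shows "coeff_norm1 ([:- w, 1:] * p) \<le> (1 + norm w) * coeff_norm1 p"
proof -
  have "coeff_norm1 ([:- w, 1:] * p) = coeff_norm1 (smult (- w) p + pCons 0 p)"
    by simp
  also have "\<dots> \<le> coeff_norm1 (smult (- w) p) + coeff_norm1 (pCons 0 p)"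
    by (rule coeff_norm1_add)
  also have "\<dots> = (1 + norm w) * coeff_norm1 p"
    by (simp only: coeff_norm1_smult coeff_norm1_pCons_0 norm_minus_cancel) (simp add: algebra_simps)
  finally show ?thesis .
qed

lemma coeff_norm1_prod_linear_mult:
  fixes f :: "'i \<Rightarrow> 'a::real_normed_field"
  assumes "finite A"
  shows "coeff_norm1 ((\<Prod>i\<in>A. [:- f i, 1:]) * p) \<le> (\<Prod>i\<in>A. 1 + norm (f i)) * coeff_norm1 p"
  using assms
proof (induction A rule: finite_induct)
  case empty
  then show ?case by simp
next
  case (insert x A)
  have "coeff_norm1 ((\<Prod>i\<in>insert x A. [:- f i, 1:]) * p)
      = coeff_norm1 ([:- f x, 1:] * ((\<Prod>i\<in>A. [:- f i, 1:]) * p))"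
    by (simp only: prod.insert[OF insert.hyps] mult.assoc)
  also have "\<dots> \<le> (1 + norm (f x)) * coeff_norm1 ((\<Prod>i\<in>A. [:- f i, 1:]) * p)"
    by (rule coeff_norm1_linear_mult)
  also have "\<dots> \<le> (1 + norm (f x)) * ((\<Prod>i\<in>A. 1 + norm (f i)) * coeff_norm1 p)"
    using insert.IH by (intro mult_left_mono) auto
  finally show ?case
    using insert.hyps by (simp add: mult.assoc)
qed

lemma coeff_norm1_prod_unit_linear_mult:
  fixes f :: "'i \<Rightarrow> 'a::real_normed_field"
  assumes "finite A" "\<forall>i\<in>A. norm (f i) = 1"
  shows "coeff_norm1 ((\<Prod>i\<in>A. [:- f i, 1:]) * p) \<le> 2 ^ card A * coeff_norm1 p"
proof -
  have "(\<Prod>i\<in>A. 1 + norm (f i)) = (\<Prod>i\<in>A. 2)"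
    using assms(2) by (intro prod.cong) auto
  then show ?thesis
    using coeff_norm1_prod_linear_mult[OF assms(1), of f p] by simp
qed

lemma norm_sum_coeff_mult_le:
  fixes p :: "'a::real_normed_field poly"
  assumes "degree p \<le> N" "\<forall>i\<le>N. norm (x i) \<le> M"
  shows "norm (\<Sum>i\<le>N. coeff p i * x i) \<le> coeff_norm1 p * M"
proof -
  have "norm (\<Sum>i\<le>N. coeff p i * x i) \<le> (\<Sum>i\<le>N. norm (coeff p i) * M)"
    using assms(2) by (intro order_trans[OF norm_sum] sum_mono)
      (auto simp: norm_mult intro: mult_left_mono)
  also have "\<dots> = coeff_norm1 p * M"
    by (simp add: coeff_norm1_eq[OF assms(1)] sum_distrib_right)
  finally show ?thesis .
qed

section \<open>Residuals of power sums\<close>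

lemma poly_eq_sum_upto:
  fixes p :: "'a::comm_semiring_1 poly"
  assumes "degree p \<le> N"
  shows "poly p x = (\<Sum>i\<le>N. coeff p i * x ^ i)"
  unfolding poly_altdef using assms
  by (intro sum.mono_neutral_left) (auto simp: coeff_eq_0)

lemma sum_coeff_mult_power_sums:
  fixes P :: "'a::comm_ring_1 poly"
  assumes "finite K" "finite I" "j0 \<in> I" "degree P \<le> N"
    and "\<forall>p\<in>K. poly P (w p) = 0" "\<forall>j\<in>I - {j0}. poly P (z j) = 0"
  shows "(\<Sum>i\<le>N. coeff P i * ((\<Sum>p\<in>K. c p * w p ^ i) - (\<Sum>j\<in>I. a j * z j ^ i)))
           = - (a j0 * poly P (z j0))"
proof -
  have "(\<Sum>i\<le>N. coeff P i * ((\<Sum>p\<in>K. c p * w p ^ i) - (\<Sum>j\<in>I. a j * z j ^ i)))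
      = (\<Sum>p\<in>K. c p * poly P (w p)) - (\<Sum>j\<in>I. a j * poly P (z j))"
    by (simp add: poly_eq_sum_upto[OF assms(4)] right_diff_distrib sum_subtractf
        sum_distrib_left sum.swap[of _ K] sum.swap[of _ I] mult_ac)
  also have "\<dots> = - (a j0 * poly P (z j0))"
    using assms(2,3,5,6) by (simp add: sum.remove)
  finally show ?thesis .
qed

lemma norm_le_vnorm2:
  assumes "i \<le> s"
  shows "cmod (v i) \<le> vnorm2 s v"
proof -
  have "(cmod (v i))^2 \<le> (\<Sum>i\<le>s. (cmod (v i))^2)"
    using assms by (intro member_le_sum) auto
  then show ?thesis
    unfolding vnorm2_def by (simp add: real_le_rsqrt)
qed

lemma vnorm2_nonneg: "0 \<le> vnorm2 s v"
  unfolding vnorm2_def by (simp add: sum_nonneg)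

lemma cmod_mult_poly_le_coeff_norm1_vnorm2:
  fixes P :: "complex poly"
  assumes "finite K" "finite I" "j0 \<in> I" "degree P \<le> s"
    and "\<forall>p\<in>K. poly P (w p) = 0" "\<forall>j\<in>I - {j0}. poly P (z j) = 0"
    and "\<forall>i\<le>s. x i = (\<Sum>p\<in>K. c p * w p ^ i) - (\<Sum>j\<in>I. a j * z j ^ i)"
  shows "cmod (a j0) * cmod (poly P (z j0)) \<le> coeff_norm1 P * vnorm2 s x"
proof -
  have "(\<Sum>i\<le>s. coeff P i * x i) = - (a j0 * poly P (z j0))"
    using sum_coeff_mult_power_sums[OF assms(1-6)] assms(7) by simp
  then show ?thesis
    using norm_sum_coeff_mult_le[OF assms(4)] norm_le_vnorm2 by (metis norm_minus_cancel norm_mult)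
qed

lemma vmult_pad:
  assumes "q \<le> k"
  shows "vmult s q t c = vmult s k t (\<lambda>p. if p \<le> q then c p else 0)"
proof
  fix i
  show "vmult s q t c i = vmult s k t (\<lambda>p. if p \<le> q then c p else 0) i"
    unfolding vmult_def using assms by (intro sum.mono_neutral_cong_left) auto
qed

lemma vmult_eq_power_sum:
  assumes "i \<le> s"
  shows "vmult s n t c i = (\<Sum>p\<in>{1..n}. c p * exp (\<i> * of_real (t p)) ^ i)"
  unfolding vmult_def phi_def using assms by (simp add: mult.commute)

lemma vnorm2_vmult_diff_ge:
  fixes t \<theta> :: "nat \<Rightarrow> real" and c a :: "nat \<Rightarrow> complex"
  defines "z \<equiv> \<lambda>j. exp (\<i> * of_real (\<theta> j))"
  assumes inj: "inj_on z {1..n+1}"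
  obtains j0 where "j0 \<in> {1..n+1}"
    "cmod (a j0) * (\<Prod>j\<in>{1..n+1} - {j0}. cmod (z j0 - z j))^2
       \<le> (n + 1) * 4 ^ n * vnorm2 (2*n) (\<lambda>i. vmult (2*n) n t c i - vmult (2*n) (n+1) \<theta> a i)"
proof -
  define I K where "I = {1..n+1}" and "K = {1..n}"
  define w where "w p = exp (\<i> * of_real (t p))" for p
  define x where "x i = vmult (2*n) n t c i - vmult (2*n) (n+1) \<theta> a i" for i
  define R where "R = (\<Prod>p\<in>K. [:- w p, 1:])"
  have fin: "finite I" "finite K" and card: "card I = n + 1" "card K = n"
    unfolding I_def K_def by auto
  have "degree R < card I" "coeff R (card I - 1) = 1"
    unfolding R_def using degree_prod_linear[OF fin(2), of w] coeff_prod_linear_card[OF fin(2), of w] card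
    by simp_all
  then obtain j0 where j0: "j0 \<in> I"
    and node: "cmod (poly (node_poly I z j0) (z j0)) \<le> card I * cmod (poly R (z j0))"
    using exists_node_poly_le[OF fin(1)] inj unfolding I_def by blast
  define G where "G = cmod (poly (node_poly I z j0) (z j0))"
  define P where "P = R * node_poly I z j0"
  have degP: "degree P \<le> 2 * n"
    using degree_mult_le[of R "node_poly I z j0"] degree_prod_linear[OF fin(2), of w]
      degree_node_poly[OF fin(1) j0, of z] card
    unfolding P_def R_def by simp
  have "coeff_norm1 P \<le> 2 ^ n * coeff_norm1 ((\<Prod>i\<in>I - {j0}. [:- z i, 1:]) * 1)"
    using coeff_norm1_prod_unit_linear_mult[OF fin(2), of w] card
    unfolding P_def R_def node_poly_def by (simp add: w_def)
  also have "\<dots> \<le> 2 ^ n * 2 ^ n"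
    using coeff_norm1_prod_unit_linear_mult[of "I - {j0}" z 1] fin(1) j0 card
    by (simp add: z_def coeff_norm1_1 card_Diff_singleton)
  finally have "coeff_norm1 P \<le> 4 ^ n"
    by (simp flip: power_mult_distrib)
  moreover have "cmod (a j0) * cmod (poly P (z j0)) \<le> coeff_norm1 P * vnorm2 (2*n) x"
  proof (rule cmod_mult_poly_le_coeff_norm1_vnorm2[OF fin(2,1) j0 degP])
    show "\<forall>p\<in>K. poly P (w p) = 0"
      using poly_prod_linear_eq_0[OF fin(2), of _ w] unfolding P_def R_def by simp
    show "\<forall>j\<in>I - {j0}. poly P (z j) = 0"
    proof
      fix j
      assume "j \<in> I - {j0}"
      then show "poly P (z j) = 0"
        unfolding P_def using poly_node_poly_eq_0[OF fin(1), of j j0 z] by simp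
    qed
    show "\<forall>i\<le>2 * n. x i = (\<Sum>p\<in>K. c p * w p ^ i) - (\<Sum>j\<in>I. a j * z j ^ i)"
      unfolding x_def by (simp add: vmult_eq_power_sum I_def K_def w_def z_def)
  qed
  ultimately have pairing: "cmod (a j0) * cmod (poly P (z j0)) \<le> 4 ^ n * vnorm2 (2*n) x"
    using vnorm2_nonneg by (meson order_trans mult_right_mono)
  have "G * G \<le> (n + 1) * cmod (poly R (z j0)) * G"
    using node card unfolding G_def by (simp add: mult_right_mono)
  also have "\<dots> = (n + 1) * cmod (poly P (z j0))"
    unfolding G_def P_def by (simp add: norm_mult)
  finally have "cmod (a j0) * G^2 \<le> cmod (a j0) * ((n + 1) * cmod (poly P (z j0)))"
    by (simp add: power2_eq_square mult_left_mono)
  also have "\<dots> = (n + 1) * (cmod (a j0) * cmod (poly P (z j0)))"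
    by (simp add: mult_ac)
  also have "\<dots> \<le> (n + 1) * (4 ^ n * vnorm2 (2*n) x)"
    using pairing by (rule mult_left_mono) simp
  also have "G = (\<Prod>j\<in>I - {j0}. cmod (z j0 - z j))"
    unfolding G_def node_poly_def poly_prod by (simp add: prod_norm)
  finally show ?thesis
    using that j0 unfolding I_def x_def by (simp only: mult.assoc of_nat_add of_nat_1)
qed

theorem theorem3p2:
  fixes k q :: nat and \<theta> :: "nat \<Rightarrow> real" and a :: "nat \<Rightarrow> complex"
    and m_min \<theta>_min :: real
  assumes "k \<ge> 1"
    and "\<forall>j\<in>{1..k+1}. \<theta> j \<in> {-pi/2..pi/2}"
    and "inj_on \<theta> {1..k+1}"
    and "\<theta>_min = Min {\<bar>\<theta> p - \<theta> j\<bar> | p j. p \<in> {1..k+1} \<and> j \<in> {1..k+1} \<and> p \<noteq> j}"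
    and "m_min > 0"
    and "\<forall>j\<in>{1..k+1}. cmod (a j) \<ge> m_min"
    and "q \<le> k"
  shows "\<forall>\<theta>h :: nat \<Rightarrow> real. \<forall>ah :: nat \<Rightarrow> complex.
           vnorm2 (2*k) (\<lambda>i. vmult (2*k) q \<theta>h ah i - vmult (2*k) (k+1) \<theta> a i)
             \<ge> zeta (k+1) * xi k * m_min * \<theta>_min ^ (2*k) / pi ^ (2*k)"
proof (intro allI)
  fix \<theta>h :: "nat \<Rightarrow> real" and ah :: "nat \<Rightarrow> complex"
  define V where "V = vnorm2 (2*k) (\<lambda>i. vmult (2*k) q \<theta>h ah i - vmult (2*k) (k+1) \<theta> a i)"
  define T where "T = \<theta>_min ^ (2*k) / pi ^ (2*k)"
  define g where "g = (2 / pi * \<theta>_min) ^ k * zeta (k + 1)"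
  have V: "V = vnorm2 (2*k) (\<lambda>i. vmult (2*k) k \<theta>h (\<lambda>p. if p \<le> q then ah p else 0) i
                                   - vmult (2*k) (k+1) \<theta> a i)"
    unfolding V_def vmult_pad[OF assms(7)] ..
  have \<theta>_min_pos: "0 < \<theta>_min"
    and sep: "\<forall>p\<in>{1..k+1}. \<forall>j\<in>{1..k+1}. p \<noteq> j \<longrightarrow> \<theta>_min \<le> \<bar>\<theta> p - \<theta> j\<bar>"
    using Min_pairwise_dist[of "{1..k+1}" \<theta> 1 2] assms(1,3,4) by auto
  obtain j0 where j0: "j0 \<in> {1..k+1}" and bound:
    "cmod (a j0) * (\<Prod>j\<in>{1..k+1} - {j0}. cmod (exp (\<i> * of_real (\<theta> j0)) - exp (\<i> * of_real (\<theta> j))))^2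
       \<le> (real k + 1) * 4 ^ k * V"
    using vnorm2_vmult_diff_ge[OF inj_on_exp_i[OF assms(3,2)], of a \<theta>h] unfolding V by blast
  have "g \<le> (\<Prod>j\<in>{1..k+1} - {j0}. cmod (exp (\<i> * of_real (\<theta> j0)) - exp (\<i> * of_real (\<theta> j))))"
    using prod_norm_exp_i_diff_ge[OF _ j0 \<theta>_min_pos assms(2) sep] unfolding g_def by simp
  then have "m_min * g^2 \<le> (real k + 1) * 4 ^ k * V"
    using assms(5,6) j0 \<theta>_min_pos zeta_nonneg[of "k + 1"] unfolding g_def
    by (intro order_trans[OF _ bound] mult_mono power_mono) auto
  moreover have "g^2 = ((2 / pi * \<theta>_min)^2) ^ k * zeta (k + 1)^2"
    unfolding g_def by (simp only: power_mult_distrib mult.commute[of k 2] flip: power_mult)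
  then have "g^2 = 4 ^ k * (zeta (k + 1)^2 * T)"
    unfolding T_def by (simp add: power_mult power_mult_distrib power_divide)
  ultimately have "m_min * zeta (k + 1)^2 * T \<le> (real k + 1) * V"
    by (simp add: mult_ac)
  moreover have "0 \<le> T"
    unfolding T_def using \<theta>_min_pos by simp
  ultimately have "zeta (k + 1) * xi k * m_min * T \<le> V"
    using assms(5) by (intro zeta_xi_mult_le[OF assms(1)]) auto
  then show "zeta (k+1) * xi k * m_min * \<theta>_min ^ (2*k) / pi ^ (2*k) \<le> V"
    unfolding T_def by simp
qed

end
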